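(* The set $S\setminus\widehat{c}$ is strongly $\mathfrak{c}$-algebrable in the algebra $\ell^\infty$ (with pointwise operations).
   Context: $\ell^\infty$ is the algebra of bounded real sequences with coordinatewise operations. A Banach limit is a linear functional $L\colon\ell^\infty\to\mathbb R$ such that for every $(x_n)\in\ell^\infty$: (1) if $x_n\ge0$ for all $n$ then $L((x_n))\ge0$; (2) $L((x_2,x_3,\dots))=L((x_1,x_2,\dots))$; (3) $L((1,1,\dots))=1$. $\widehat{c}$ is the set of $x\in\ell^\infty$ for which there is $s\in\mathbb R$ with $L(x)=s$ for every Banach limit $L$. $S=\{x\in\ell^\infty\colon\lim_n\frac{x_1+\dots+x_n}{n}\text{ exists}\}$. A subset $A$ of a commutative algebra $\mathcal L$ is strongly $\kappa$-algebrable if $A\cup\{0\}$ contains a $\kappa$-generated subalgebra (minimal number of generators of cardinality $\kappa$) which is isomorphic to a free algebra; equivalently, there is a set $Z\subset\mathcal L$ of cardinality $\kappa$ such that for every $n$, every non-zero polynomial $P$ in $n$ variables without constant term and all distinct $z_1,\dots,z_n\in Z$, $P(z_1,\dots,z_n)\in A\setminus\{0\}$. $\mathfrak c$ is the cardinality of the continuum. *)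

theory Defs
  imports "HOL-Analysis.Analysis" "HOL-Library.Equipollence"
begin

text \<open>ell-infinity: bounded real sequences (indexed from 0 instead of 1).\<close>
definition linf :: "(nat \<Rightarrow> real) set" where
  "linf = {x. Bseq x}"

text \<open>Banach limit: a linear functional on linf (values outside linf are irrelevant),
positive, shift invariant, and normalised.\<close>
definition banach_limit :: "((nat \<Rightarrow> real) \<Rightarrow> real) \<Rightarrow> bool" where
  "banach_limit L \<longleftrightarrow>
     (\<forall>x\<in>linf. \<forall>y\<in>linf. L (\<lambda>n. x n + y n) = L x + L y) \<and>
     (\<forall>x\<in>linf. \<forall>c::real. L (\<lambda>n. c * x n) = c * L x) \<and>
     (\<forall>x\<in>linf. (\<forall>n. x n \<ge> 0) \<longrightarrow> L x \<ge> 0) \<and>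
     (\<forall>x\<in>linf. L (\<lambda>n. x (Suc n)) = L x) \<and>
     L (\<lambda>n. 1) = 1"

definition c_hat :: "(nat \<Rightarrow> real) set" where
  "c_hat = {x\<in>linf. \<exists>s. \<forall>L. banach_limit L \<longrightarrow> L x = s}"

text \<open>S: Cesaro summable bounded sequences; (x_1+...+x_n)/n with 0-based indexing.\<close>
definition cesaro_S :: "(nat \<Rightarrow> real) set" where
  "cesaro_S = {x\<in>linf. convergent (\<lambda>n. (\<Sum>i<Suc n. x i) / real (Suc n))}"

text \<open>A polynomial in n variables (variables indexed 0..n-1) with real coefficients is
given by a finitely supported coefficient function c on exponent vectors
alpha :: nat \<Rightarrow> nat.\<close>
definition nonconst_poly :: "nat \<Rightarrow> ((nat \<Rightarrow> nat) \<Rightarrow> real) \<Rightarrow> bool" where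
  "nonconst_poly n c \<longleftrightarrow>
     finite {\<alpha>. c \<alpha> \<noteq> 0} \<and>
     (\<forall>\<alpha>. c \<alpha> \<noteq> 0 \<longrightarrow> (\<forall>i\<ge>n. \<alpha> i = 0)) \<and>
     c (\<lambda>_. 0) = 0 \<and>
     (\<exists>\<alpha>. c \<alpha> \<noteq> 0)"

definition poly_eval :: "nat \<Rightarrow> ((nat \<Rightarrow> nat) \<Rightarrow> real) \<Rightarrow> (nat \<Rightarrow> nat \<Rightarrow> real) \<Rightarrow> nat \<Rightarrow> real" where
  "poly_eval n c z = (\<lambda>k. \<Sum>\<alpha>\<in>{\<alpha>. c \<alpha> \<noteq> 0}. c \<alpha> * (\<Prod>i<n. (z i k) ^ (\<alpha> i)))"

text \<open>Strong kappa-algebrability in linf, kappa given by an equipollent set K.\<close>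
definition strongly_algebrable :: "'k set \<Rightarrow> (nat \<Rightarrow> real) set \<Rightarrow> bool" where
  "strongly_algebrable K A \<longleftrightarrow>
     (\<exists>Z. Z \<subseteq> linf \<and> Z \<approx> K \<and>
        (\<forall>n c z. nonconst_poly n c \<and> inj_on z {..<n} \<and> z ` {..<n} \<subseteq> Z \<longrightarrow>
           poly_eval n c z \<in> A - {\<lambda>_. 0}))"

end

theory Submission
  imports Defs "HOL-Computational_Algebra.Polynomial" "HOL-Real_Asymp.Real_Asymp"
begin

text \<open>
  Cut \<open>\<nat>\<close> into the blocks \<open>[j^4, j^4 + j)\<close>; together they have density zero. The
  sequence attached to \<open>t \<in> \<real>\<close> vanishes off the blocks and is constant on block \<open>j\<close>,
  with the value that the \<open>j\<close>-th finite dyadic pattern gives to the dyadic interval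
  containing \<open>t\<close>. A polynomial without constant term, applied to the sequences of distinct
  reals \<open>t\<^sub>1, \<dots>, t\<^sub>n\<close>, again vanishes off the blocks, so its Cesaro means tend to \<open>0\<close>
  and some Banach limit gives it the value \<open>0\<close>. Distinct reals eventually lie in distinct
  dyadic intervals, so every assignment of values \<open>1 / (s\<^sub>i + 1)\<close> to the \<open>t\<^sub>i\<close> is realised
  on infinitely many blocks; by Kronecker substitution some such assignment is not a zero
  of the polynomial, and averaging over those blocks along an ultrafilter yields a Banach
  limit with a nonzero value (it is shift invariant because the blocks get longer). So
  the polynomial lies in \<open>S\<close> but not in \<open>c_hat\<close>.
\<close>

section \<open>Banach limits from window averages\<close>

lemma ultrafilter_exists:
  fixes F :: "'a filter"
  assumes "F \<noteq> bot"
  shows "\<exists>U. U \<noteq> bot \<and> U \<le> F \<and> (\<forall>P. eventually P U \<or> eventually (\<lambda>x. \<not> P x) U)"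
proof -
  define A where "A = {G. G \<noteq> bot \<and> G \<le> F}"
  have "partial_order_on A (relation_of (\<ge>) A)"
    by (rule partial_order_on_relation_ofI) auto
  then obtain U where U: "U \<in> A" and max: "\<And>G. G \<in> A \<Longrightarrow> G \<le> U \<Longrightarrow> G = U"
  proof (rule predicate_Zorn[THEN bexE])
    fix C assume C: "C \<in> Chains (relation_of (\<ge>) A)"
    show "\<exists>G\<in>A. \<forall>H\<in>C. G \<le> H"
    proof (cases "C = {}")
      case True
      then show ?thesis using assms by (auto simp: A_def)
    next
      case False
      have CA: "C \<subseteq> A" using C by (rule Chains_relation_of)
      have total: "H \<le> K \<or> K \<le> H" if "H \<in> C" "K \<in> C" for H K
        using C that unfolding Chains_def relation_of_def by auto
      have ev: "eventually P (Inf C) \<longleftrightarrow> (\<exists>H\<in>C. eventually P H)" for P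
        by (rule eventually_Inf_base[OF False]) (metis total inf.absorb1 inf.absorb2)
      have "Inf C \<noteq> bot"
        using ev[of "\<lambda>_. False"] CA by (auto simp: A_def trivial_limit_def)
      moreover obtain H where "H \<in> C" using False by blast
      then have "Inf C \<le> F" using CA by (auto simp: A_def intro: Inf_lower2)
      ultimately show ?thesis by (auto simp: A_def intro: Inf_lower)
    qed
  qed auto
  have "eventually P U" if "\<not> eventually (\<lambda>x. \<not> P x) U" for P
  proof -
    define G where "G = inf U (principal {x. P x})"
    have "G \<noteq> bot" using that by (simp add: G_def trivial_limit_def eventually_inf_principal)
    moreover have "G \<le> F" using U by (simp add: A_def G_def le_infI1)
    ultimately have "G = U" by (intro max) (auto simp: A_def G_def)
    moreover have "eventually P G"
      unfolding G_def eventually_inf_principal by simp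
    ultimately show ?thesis by simp
  qed
  then show ?thesis using U by (auto simp: A_def)
qed

lemma ultrafilter_tendsto_bounded:
  fixes f :: "'a \<Rightarrow> real"
  assumes U: "U \<noteq> bot" "\<And>P. eventually P U \<or> eventually (\<lambda>x. \<not> P x) U"
    and bounded: "\<And>x. \<bar>f x\<bar> \<le> B"
  shows "\<exists>l. (f \<longlongrightarrow> l) U"
proof -
  let ?F = "filtermap f U"
  have "?F \<noteq> bot" using U(1) by (simp add: filtermap_bot_iff)
  moreover have "eventually (\<lambda>y. y \<in> cball 0 B) ?F"
    using bounded by (simp add: eventually_filtermap dist_real_def)
  ultimately obtain l where l: "inf (nhds l) ?F \<noteq> bot"
    using compact_cball[of "0::real" B] unfolding compact_filter by blast
  have "?F \<le> nhds l"
  proof (rule filter_leI)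
    fix P assume P: "eventually P (nhds l)"
    show "eventually P ?F"
    proof (rule ccontr)
      assume "\<not> eventually P ?F"
      then have "eventually (\<lambda>y. \<not> P y) ?F"
        using U(2)[of "\<lambda>x. P (f x)"] by (simp add: eventually_filtermap)
      then have "eventually (\<lambda>_. False) (inf (nhds l) ?F)"
        using P eventually_inf by fastforce
      then show False using l by (simp add: trivial_limit_def)
    qed
  qed
  then show ?thesis unfolding filterlim_def by blast
qed

lemma linf_abs_bound:
  assumes "x \<in> linf"
  obtains B where "\<And>n. \<bar>x n\<bar> \<le> B"
  using assms unfolding linf_def Bseq_def by auto

definition window_avg :: "(nat \<Rightarrow> nat) \<Rightarrow> (nat \<Rightarrow> nat) \<Rightarrow> (nat \<Rightarrow> real) \<Rightarrow> nat \<Rightarrow> real" where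
  "window_avg a m x k = (\<Sum>i<m k. x (a k + i)) / real (m k)"

lemma window_avg_abs_le:
  assumes "\<And>n. \<bar>x n\<bar> \<le> B" and "m k > 0"
  shows "\<bar>window_avg a m x k\<bar> \<le> B"
proof -
  have "\<bar>\<Sum>i<m k. x (a k + i)\<bar> \<le> (\<Sum>i<m k. \<bar>x (a k + i)\<bar>)" by (rule sum_abs)
  also have "\<dots> \<le> real (m k) * B" using sum_mono[of "{..<m k}", OF assms(1)] by simp
  finally show ?thesis
    using assms(2) by (simp add: window_avg_def divide_le_eq mult.commute)
qed

lemma window_avg_shift:
  "window_avg a m (\<lambda>n. x (Suc n)) k - window_avg a m x k = (x (a k + m k) - x (a k)) / real (m k)"
proof -
  have "(\<Sum>i<m k. x (a k + Suc i)) - (\<Sum>i<m k. x (a k + i)) = (\<Sum>i<m k. x (a k + Suc i) - x (a k + i))"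
    by (simp add: sum_subtractf)
  also have "\<dots> = x (a k + m k) - x (a k + 0)"
    by (rule sum_lessThan_telescope)
  finally show ?thesis by (simp add: window_avg_def diff_divide_distrib[symmetric])
qed

lemma window_avg_shift_tendsto_0:
  assumes "\<And>n. \<bar>x n\<bar> \<le> B" and "filterlim m at_top sequentially"
  shows "(\<lambda>k. window_avg a m (\<lambda>n. x (Suc n)) k - window_avg a m x k) \<longlonglongrightarrow> 0"
  unfolding window_avg_shift
proof (rule Lim_null_comparison)
  have "\<bar>x (a k + m k) - x (a k)\<bar> \<le> 2 * B" for k
    using assms(1)[of "a k + m k"] assms(1)[of "a k"] by linarith
  then show "\<forall>\<^sub>F k in sequentially.
      norm ((x (a k + m k) - x (a k)) / real (m k)) \<le> 2 * B / real (m k)"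
    by (simp add: divide_right_mono)
  have "filterlim (\<lambda>k. real (m k)) at_top sequentially"
    using filterlim_compose[OF filterlim_real_sequentially assms(2)] by (simp add: o_def)
  then show "(\<lambda>k. 2 * B / real (m k)) \<longlonglongrightarrow> 0"
    by (intro tendsto_divide_0[OF tendsto_const] filterlim_at_top_imp_at_infinity)
qed

lemma banach_limit_window_ultralimit:
  assumes U: "U \<noteq> bot" "U \<le> sequentially" "\<And>P. eventually P U \<or> eventually (\<lambda>x. \<not> P x) U"
    and m: "\<And>k. m k > 0" "filterlim m at_top sequentially"
  shows "banach_limit (\<lambda>x. Lim U (window_avg a m x))" (is "banach_limit ?L")
proof -
  have Lim_eq: "?L x = l" if "(window_avg a m x \<longlongrightarrow> l) U" for x l
    using tendsto_Lim[OF _ that] U(1) by (simp add: trivial_limit_def)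
  have lim: "(window_avg a m x \<longlongrightarrow> ?L x) U" if x: "x \<in> linf" for x
  proof -
    obtain B where "\<And>n. \<bar>x n\<bar> \<le> B" using linf_abs_bound[OF x] by blast
    then obtain l where "(window_avg a m x \<longlongrightarrow> l) U"
      using ultrafilter_tendsto_bounded[OF U(1,3) window_avg_abs_le] m(1) by meson
    with Lim_eq show ?thesis by simp
  qed
  show ?thesis
    unfolding banach_limit_def
  proof (intro conjI ballI allI impI)
    fix x y assume x: "x \<in> linf" and y: "y \<in> linf"
    have "window_avg a m (\<lambda>n. x n + y n) = (\<lambda>k. window_avg a m x k + window_avg a m y k)"
      by (auto simp: window_avg_def sum.distrib add_divide_distrib)
    then have "(window_avg a m (\<lambda>n. x n + y n) \<longlongrightarrow> ?L x + ?L y) U"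
      using tendsto_add[OF lim[OF x] lim[OF y]] by simp
    then show "?L (\<lambda>n. x n + y n) = ?L x + ?L y" by (rule Lim_eq)
  next
    fix x c assume x: "x \<in> linf"
    have "window_avg a m (\<lambda>n. c * x n) = (\<lambda>k. c * window_avg a m x k)"
      by (auto simp: window_avg_def sum_distrib_left)
    then have "(window_avg a m (\<lambda>n. c * x n) \<longlongrightarrow> c * ?L x) U"
      using tendsto_mult_left[OF lim[OF x]] by simp
    then show "?L (\<lambda>n. c * x n) = c * ?L x" by (rule Lim_eq)
  next
    fix x assume x: "x \<in> linf" and "\<forall>n. 0 \<le> x n"
    then have "\<forall>k. 0 \<le> window_avg a m x k"
      by (auto simp: window_avg_def intro!: divide_nonneg_nonneg sum_nonneg)
    then show "0 \<le> ?L x"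
      using tendsto_lowerbound[OF lim[OF x], of 0] U(1) by (simp add: always_eventually)
  next
    fix x assume x: "x \<in> linf"
    obtain B where "\<And>n. \<bar>x n\<bar> \<le> B" using linf_abs_bound[OF x] by blast
    from tendsto_mono[OF U(2) window_avg_shift_tendsto_0[OF this m(2)]]
    have "((\<lambda>k. window_avg a m (\<lambda>n. x (Suc n)) k - window_avg a m x k) \<longlongrightarrow> 0) U" .
    from tendsto_add[OF this lim[OF x]] show "?L (\<lambda>n. x (Suc n)) = ?L x"
      by (intro Lim_eq) simp
  next
    have "window_avg a m (\<lambda>n. 1) = (\<lambda>k. 1)" using m(1) by (auto simp: window_avg_def)
    then show "?L (\<lambda>n. 1) = 1" using Lim_eq[of "\<lambda>n. 1" 1] by simp
  qed
qed

lemma banach_limit_exists_window_avg: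
  assumes "\<And>k. m k > 0" and "filterlim m at_top sequentially"
    and "window_avg a m x \<longlonglongrightarrow> v"
  shows "\<exists>L. banach_limit L \<and> L x = v"
proof -
  obtain U :: "nat filter" where U: "U \<noteq> bot" "U \<le> sequentially"
    "\<And>P. eventually P U \<or> eventually (\<lambda>x. \<not> P x) U"
    using ultrafilter_exists[OF sequentially_bot] by blast
  have "Lim U (window_avg a m x) = v"
    using tendsto_Lim tendsto_mono[OF U(2) assms(3)] U(1) by (simp add: trivial_limit_def)
  with banach_limit_window_ultralimit[OF U assms(1,2)] show ?thesis
    by (intro exI[of _ "\<lambda>x. Lim U (window_avg a m x)"]) simp
qed

lemma banach_limit_exists_cesaro:
  assumes "(\<lambda>N. (\<Sum>i<Suc N. x i) / real (Suc N)) \<longlonglongrightarrow> v"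
  shows "\<exists>L. banach_limit L \<and> L x = v"
proof -
  have "window_avg (\<lambda>_. 0) Suc x = (\<lambda>N. (\<Sum>i<Suc N. x i) / real (Suc N))"
    by (rule ext) (simp add: window_avg_def)
  with assms show ?thesis
    by (intro banach_limit_exists_window_avg[OF _ filterlim_Suc, where a = "\<lambda>_. 0"]) simp_all
qed

lemma banach_limit_zero:
  assumes "banach_limit L"
  shows "L (\<lambda>_. 0) = 0"
proof -
  have hom: "\<forall>x\<in>linf. \<forall>c. L (\<lambda>n. c * x n) = c * L x"
    using assms unfolding banach_limit_def by blast
  have "(\<lambda>_. 1) \<in> linf" by (simp add: linf_def)
  from hom[rule_format, OF this, of 0] show ?thesis by simp
qed

lemma not_in_c_hat:
  assumes "banach_limit L\<^sub>1" and "banach_limit L\<^sub>2" and "L\<^sub>1 x \<noteq> L\<^sub>2 x"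
  shows "x \<notin> c_hat"
proof
  assume "x \<in> c_hat"
  then obtain l where "\<And>L. banach_limit L \<Longrightarrow> L x = l" unfolding c_hat_def by blast
  with assms(1,2) have "L\<^sub>1 x = l" "L\<^sub>2 x = l" by blast+
  with assms(3) show False by simp
qed

section \<open>Polynomials and Kronecker substitution\<close>

definition poly_value :: "nat \<Rightarrow> ((nat \<Rightarrow> nat) \<Rightarrow> real) \<Rightarrow> (nat \<Rightarrow> real) \<Rightarrow> real" where
  "poly_value n c w = (\<Sum>\<alpha>\<in>{\<alpha>. c \<alpha> \<noteq> 0}. c \<alpha> * (\<Prod>i<n. w i ^ \<alpha> i))"

lemma poly_eval_apply: "poly_eval n c z k = poly_value n c (\<lambda>i. z i k)"
  by (simp add: poly_eval_def poly_value_def)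

lemma poly_value_cong:
  "(\<And>i. i < n \<Longrightarrow> w i = w' i) \<Longrightarrow> poly_value n c w = poly_value n c w'"
  by (simp add: poly_value_def)

lemma poly_eval_cong:
  "(\<And>i. i < n \<Longrightarrow> z i = z' i) \<Longrightarrow> poly_eval n c z = poly_eval n c z'"
  by (simp add: poly_eval_def)

lemma poly_value_zero:
  assumes "c (\<lambda>_. 0) = 0" and "\<forall>\<alpha>. c \<alpha> \<noteq> 0 \<longrightarrow> (\<forall>i\<ge>n. \<alpha> i = 0)"
  shows "poly_value n c (\<lambda>_. 0) = 0"
  unfolding poly_value_def
proof (rule sum.neutral, rule ballI)
  fix \<alpha> assume "\<alpha> \<in> {\<alpha>. c \<alpha> \<noteq> 0}"
  then have "\<alpha> \<noteq> (\<lambda>_. 0)" and vars: "\<forall>i\<ge>n. \<alpha> i = 0" using assms by auto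
  then obtain i where "\<alpha> i \<noteq> 0" by auto
  with vars have "i < n" by (meson not_le)
  with \<open>\<alpha> i \<noteq> 0\<close> have "(\<Prod>i<n. (0::real) ^ \<alpha> i) = 0" by (intro prod_zero) auto
  then show "c \<alpha> * (\<Prod>i<n. 0 ^ \<alpha> i) = 0" by simp
qed

lemma poly_value_abs_le:
  assumes "\<And>i. 0 \<le> w i \<and> w i \<le> 1"
  shows "\<bar>poly_value n c w\<bar> \<le> (\<Sum>\<alpha>\<in>{\<alpha>. c \<alpha> \<noteq> 0}. \<bar>c \<alpha>\<bar>)"
  unfolding poly_value_def
proof (rule order_trans[OF sum_abs sum_mono])
  fix \<alpha> :: "nat \<Rightarrow> nat"
  have "0 \<le> w i ^ \<alpha> i \<and> w i ^ \<alpha> i \<le> 1" for i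
    using assms[of i] by (simp add: power_le_one)
  then have "0 \<le> (\<Prod>i<n. w i ^ \<alpha> i)" "(\<Prod>i<n. w i ^ \<alpha> i) \<le> 1"
    by (simp_all add: prod_nonneg prod_le_1)
  then show "\<bar>c \<alpha> * (\<Prod>i<n. w i ^ \<alpha> i)\<bar> \<le> \<bar>c \<alpha>\<bar>"
    by (simp add: abs_mult mult_left_le)
qed

lemma base_expansion_inj:
  fixes D :: nat
  assumes "\<forall>i<n. \<alpha> i < D" and "\<forall>i<n. \<beta> i < D"
    and "(\<Sum>i<n. \<alpha> i * D ^ i) = (\<Sum>i<n. \<beta> i * D ^ i)"
  shows "\<forall>i<n. \<alpha> i = \<beta> i"
  using assms
proof (induction n arbitrary: \<alpha> \<beta>)
  case 0
  then show ?case by simp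
next
  case (Suc n)
  have split: "(\<Sum>i<Suc n. f i * D ^ i) = f 0 + D * (\<Sum>i<n. f (Suc i) * D ^ i)" for f :: "nat \<Rightarrow> nat"
    unfolding sum.lessThan_Suc_shift by (simp add: sum_distrib_left algebra_simps)
  have digits: "\<alpha> 0 < D" "\<beta> 0 < D" using Suc.prems by auto
  have eq: "\<alpha> 0 + D * (\<Sum>i<n. \<alpha> (Suc i) * D ^ i) = \<beta> 0 + D * (\<Sum>i<n. \<beta> (Suc i) * D ^ i)"
    using Suc.prems(3) unfolding split .
  then have "(\<alpha> 0 + D * (\<Sum>i<n. \<alpha> (Suc i) * D ^ i)) mod D
      = (\<beta> 0 + D * (\<Sum>i<n. \<beta> (Suc i) * D ^ i)) mod D"
    by simp
  then have head: "\<alpha> 0 = \<beta> 0" using digits by (simp only: mod_mult_self2 mod_less)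
  with eq digits have "(\<Sum>i<n. \<alpha> (Suc i) * D ^ i) = (\<Sum>i<n. \<beta> (Suc i) * D ^ i)" by simp
  with Suc.prems have "\<forall>i<n. \<alpha> (Suc i) = \<beta> (Suc i)"
    by (intro Suc.IH) auto
  with head show ?case by (auto simp: less_Suc_eq_0_disj)
qed

lemma poly_value_power_substitution:
  "poly_value n c (\<lambda>i. x ^ (D ^ i)) =
     poly (\<Sum>\<alpha>\<in>{\<alpha>. c \<alpha> \<noteq> 0}. monom (c \<alpha>) (\<Sum>i<n. \<alpha> i * D ^ i)) x"
  unfolding poly_value_def poly_sum poly_monom
proof (rule sum.cong[OF refl])
  fix \<alpha> :: "nat \<Rightarrow> nat"
  have "(\<Prod>i<n. (x ^ (D ^ i)) ^ \<alpha> i) = (\<Prod>i<n. x ^ (\<alpha> i * D ^ i))"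
    by (simp add: power_mult[symmetric] mult.commute)
  then show "c \<alpha> * (\<Prod>i<n. (x ^ (D ^ i)) ^ \<alpha> i) = c \<alpha> * x ^ (\<Sum>i<n. \<alpha> i * D ^ i)"
    by (simp add: power_sum)
qed

lemma kronecker_substitution_nonzero:
  assumes fin: "finite {\<alpha>. c \<alpha> \<noteq> 0}" and vars: "\<forall>\<alpha>. c \<alpha> \<noteq> 0 \<longrightarrow> (\<forall>i\<ge>n. \<alpha> i = 0)"
    and D: "\<forall>\<alpha>. c \<alpha> \<noteq> 0 \<longrightarrow> (\<forall>i. \<alpha> i < D)"
    and "c \<alpha>\<^sub>0 \<noteq> 0"
  shows "(\<Sum>\<alpha>\<in>{\<alpha>. c \<alpha> \<noteq> 0}. monom (c \<alpha>) (\<Sum>i<n. \<alpha> i * D ^ i)) \<noteq> (0 :: real poly)"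
proof -
  define \<kappa> where "\<kappa> \<alpha> = (\<Sum>i<n. \<alpha> i * D ^ i)" for \<alpha> :: "nat \<Rightarrow> nat"
  have \<kappa>_inj: "\<alpha> = \<beta>" if "c \<alpha> \<noteq> 0" "c \<beta> \<noteq> 0" "\<kappa> \<alpha> = \<kappa> \<beta>" for \<alpha> \<beta>
  proof
    fix i
    show "\<alpha> i = \<beta> i"
    proof (cases "i < n")
      case True
      with that D show ?thesis using base_expansion_inj[of n \<alpha> D \<beta>] unfolding \<kappa>_def by blast
    next
      case False
      then have "\<alpha> i = 0" "\<beta> i = 0" using vars that by auto
      then show ?thesis by simp
    qed
  qed
  have "coeff (\<Sum>\<alpha>\<in>{\<alpha>. c \<alpha> \<noteq> 0}. monom (c \<alpha>) (\<kappa> \<alpha>)) (\<kappa> \<alpha>\<^sub>0)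
      = (\<Sum>\<alpha>\<in>{\<alpha>. c \<alpha> \<noteq> 0}. if \<alpha> = \<alpha>\<^sub>0 then c \<alpha> else 0)"
    unfolding coeff_sum coeff_monom by (rule sum.cong) (use \<kappa>_inj \<open>c \<alpha>\<^sub>0 \<noteq> 0\<close> in auto)
  also have "\<dots> = c \<alpha>\<^sub>0" using fin \<open>c \<alpha>\<^sub>0 \<noteq> 0\<close> by simp
  finally show ?thesis using \<open>c \<alpha>\<^sub>0 \<noteq> 0\<close> unfolding \<kappa>_def by auto
qed

lemma poly_value_nonzero_at_reciprocals:
  assumes fin: "finite {\<alpha>. c \<alpha> \<noteq> 0}" and vars: "\<forall>\<alpha>. c \<alpha> \<noteq> 0 \<longrightarrow> (\<forall>i\<ge>n. \<alpha> i = 0)"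
    and "c \<alpha>\<^sub>0 \<noteq> 0"
  obtains s :: "nat \<Rightarrow> nat" where "poly_value n c (\<lambda>i. 1 / (real (s i) + 1)) \<noteq> 0"
proof -
  define D where "D = Suc (\<Sum>\<alpha>\<in>{\<alpha>. c \<alpha> \<noteq> 0}. \<Sum>i<n. \<alpha> i)"
  have digits: "\<forall>\<alpha>. c \<alpha> \<noteq> 0 \<longrightarrow> (\<forall>i. \<alpha> i < D)"
  proof (intro allI impI)
    fix \<alpha> :: "nat \<Rightarrow> nat" and i assume "c \<alpha> \<noteq> 0"
    show "\<alpha> i < D"
    proof (cases "i < n")
      case True
      then have "\<alpha> i \<le> (\<Sum>i<n. \<alpha> i)" by (intro member_le_sum) auto
      also have "\<dots> \<le> (\<Sum>\<alpha>\<in>{\<alpha>. c \<alpha> \<noteq> 0}. \<Sum>i<n. \<alpha> i)"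
        using \<open>c \<alpha> \<noteq> 0\<close> fin by (intro member_le_sum[where f = "\<lambda>\<alpha>. \<Sum>i<n. \<alpha> i"]) auto
      finally show ?thesis unfolding D_def by simp
    qed (use vars \<open>c \<alpha> \<noteq> 0\<close> in \<open>auto simp: D_def\<close>)
  qed
  from kronecker_substitution_nonzero[of c n D \<alpha>\<^sub>0, OF fin vars digits \<open>c \<alpha>\<^sub>0 \<noteq> 0\<close>]
  have "finite {x. poly (\<Sum>\<alpha>\<in>{\<alpha>. c \<alpha> \<noteq> 0}. monom (c \<alpha>) (\<Sum>i<n. \<alpha> i * D ^ i)) x = 0}"
    by (rule poly_roots_finite)
  moreover have "infinite (range (\<lambda>r::nat. 1 / (real r + 1)))"
    by (rule range_inj_infinite) (auto simp: inj_def)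
  ultimately have "\<not> range (\<lambda>r::nat. 1 / (real r + 1))
      \<subseteq> {x. poly (\<Sum>\<alpha>\<in>{\<alpha>. c \<alpha> \<noteq> 0}. monom (c \<alpha>) (\<Sum>i<n. \<alpha> i * D ^ i)) x = 0}"
    using finite_subset by blast
  then obtain r :: nat where r: "poly_value n c (\<lambda>i. (1 / (real r + 1)) ^ (D ^ i)) \<noteq> 0"
    unfolding poly_value_power_substitution by blast
  have recip: "(\<lambda>i. (1 / (real r + 1)) ^ (D ^ i)) = (\<lambda>i. 1 / (real ((r + 1) ^ (D ^ i) - 1) + 1))"
  proof
    fix i
    have "(r + 1) ^ (D ^ i) \<ge> 1" by simp
    then show "(1 / (real r + 1)) ^ (D ^ i) = 1 / (real ((r + 1) ^ (D ^ i) - 1) + 1)"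
      by (simp add: power_one_over add.commute)
  qed
  from r show ?thesis unfolding recip by (rule that)
qed

section \<open>Blocks of density zero\<close>

lemma cesaro_mean_tendsto_0_if_density_zero:
  fixes y :: "nat \<Rightarrow> real"
  assumes "Bseq y" and support: "\<And>k. k \<notin> A \<Longrightarrow> y k = 0"
    and density: "(\<lambda>N. real (card (A \<inter> {..<N})) / real N) \<longlonglongrightarrow> 0"
  shows "(\<lambda>N. (\<Sum>i<Suc N. y i) / real (Suc N)) \<longlonglongrightarrow> 0"
proof -
  obtain C where bounded: "\<And>k. \<bar>y k\<bar> \<le> C" using \<open>Bseq y\<close> by (auto simp: Bseq_def)
  have sum_bound: "\<bar>\<Sum>i<N. y i\<bar> \<le> C * real (card (A \<inter> {..<N}))" for N
  proof -
    have "\<bar>\<Sum>i<N. y i\<bar> \<le> (\<Sum>i<N. if i \<in> A then C else 0)"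
      by (rule order_trans[OF sum_abs sum_mono]) (use bounded support in auto)
    also have "\<dots> = C * real (card (A \<inter> {..<N}))"
      by (simp add: sum.If_cases Int_commute)
    finally show ?thesis .
  qed
  have "norm ((\<Sum>i<Suc N. y i) / real (Suc N))
      \<le> C * real (card (A \<inter> {..<Suc N})) / real (Suc N)" for N
    using sum_bound[of "Suc N"] by (simp add: divide_right_mono del: sum.lessThan_Suc)
  moreover have "(\<lambda>N. C * real (card (A \<inter> {..<Suc N})) / real (Suc N)) \<longlonglongrightarrow> 0"
    using tendsto_mult_right_zero[OF density[THEN LIMSEQ_Suc]] by simp
  ultimately show ?thesis by (rule Lim_null_comparison[OF always_eventually, OF allI])
qed

definition block :: "nat \<Rightarrow> nat set" where
  "block j = {j ^ 4..<j ^ 4 + j}"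

definition blocks :: "nat set" where
  "blocks = (\<Union>j. block j)"

definition block_index :: "nat \<Rightarrow> nat" where
  "block_index k = (THE j. k \<in> block j)"

lemma block_end_le_next_start:
  fixes j j' :: nat
  assumes "j < j'"
  shows "j ^ 4 + j \<le> j' ^ 4"
proof -
  have "j ^ 4 + j \<le> (Suc j) ^ 4" by (simp add: eval_nat_numeral algebra_simps)
  also have "\<dots> \<le> j' ^ 4" using assms by (intro power_mono) auto
  finally show ?thesis .
qed

lemma block_unique:
  assumes "k \<in> block j" and "k \<in> block j'"
  shows "j = j'"
proof (rule ccontr)
  assume "j \<noteq> j'"
  then consider "j < j'" | "j' < j" by linarith
  then show False
    using assms block_end_le_next_start[of j j'] block_end_le_next_start[of j' j]
    by cases (auto simp: block_def)
qed

lemma block_index_eq: "k \<in> block j \<Longrightarrow> block_index k = j"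
  unfolding block_index_def using block_unique by blast

lemma block_start_in_block: "0 < j \<Longrightarrow> j ^ 4 \<in> block j"
  by (simp add: block_def)

lemma card_blocks_below:
  assumes "N \<le> S ^ 4"
  shows "card (blocks \<inter> {..<N}) \<le> S ^ 2"
proof -
  have "blocks \<inter> {..<N} \<subseteq> (\<Union>j<S. block j)"
  proof
    fix k assume "k \<in> blocks \<inter> {..<N}"
    then obtain j where "k \<in> block j" "k < N" by (auto simp: blocks_def)
    then have "j ^ 4 < S ^ 4" using assms by (simp add: block_def)
    then have "j < S" by (rule power_less_imp_less_base) simp
    with \<open>k \<in> block j\<close> show "k \<in> (\<Union>j<S. block j)" by blast
  qed
  then have "card (blocks \<inter> {..<N}) \<le> card (\<Union>j<S. block j)"
    by (intro card_mono) (auto simp: block_def)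
  also have "\<dots> \<le> (\<Sum>j<S. card (block j))" by (rule card_UN_le) simp
  also have "\<dots> \<le> (\<Sum>j<S. S)" by (intro sum_mono) (simp add: block_def)
  finally show ?thesis by (simp add: power2_eq_square)
qed

lemma blocks_density_zero: "(\<lambda>N. real (card (blocks \<inter> {..<N})) / real N) \<longlonglongrightarrow> 0"
proof (rule Lim_null_comparison)
  have "real (card (blocks \<inter> {..<N})) / real N \<le> (sqrt (sqrt (real N)) + 1) ^ 2 / real N" for N
  proof -
    define S where "S = nat \<lceil>sqrt (sqrt (real N))\<rceil>"
    have root: "sqrt (sqrt (real N)) \<le> real S" unfolding S_def by linarith
    have "sqrt (sqrt (real N)) ^ 4 = (sqrt (sqrt (real N)) ^ 2) ^ 2"
      by (simp only: power_mult[symmetric]) simp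
    then have "real N = sqrt (sqrt (real N)) ^ 4" by simp
    also have "\<dots> \<le> real S ^ 4" using root by (intro power_mono) auto
    finally have "card (blocks \<inter> {..<N}) \<le> S ^ 2"
      by (intro card_blocks_below) (simp flip: of_nat_power)
    then have "real (card (blocks \<inter> {..<N})) \<le> real S ^ 2" by (simp flip: of_nat_power)
    also have "\<dots> \<le> (sqrt (sqrt (real N)) + 1) ^ 2"
    proof (rule power_mono)
      have "0 \<le> \<lceil>sqrt (sqrt (real N))\<rceil>"
        unfolding zero_le_ceiling by (rule less_le_trans[OF _ real_sqrt_ge_zero]) simp_all
      then show "real S \<le> sqrt (sqrt (real N)) + 1"
        unfolding S_def using of_int_ceiling_le_add_one[of "sqrt (sqrt (real N))"] by simp
    qed simp
    finally show ?thesis by (simp add: divide_right_mono)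
  qed
  then show "\<forall>\<^sub>F N in sequentially. norm (real (card (blocks \<inter> {..<N})) / real N)
      \<le> (sqrt (sqrt (real N)) + 1) ^ 2 / real N"
    by simp
  show "(\<lambda>N. (sqrt (sqrt (real N)) + 1) ^ 2 / real N) \<longlonglongrightarrow> 0" by real_asymp
qed

lemma banach_limit_exists_constant_on_blocks:
  assumes "infinite J" and "\<And>j k. j \<in> J \<Longrightarrow> k \<in> block j \<Longrightarrow> x k = v"
  shows "\<exists>L. banach_limit L \<and> L x = v"
proof -
  have J: "infinite (J - {0})" using assms(1) by simp
  define e where "e = enumerate (J - {0})"
  have e: "e k \<in> J - {0}" for k unfolding e_def using J by (rule enumerate_in_set)
  have "window_avg (\<lambda>k. e k ^ 4) e x = (\<lambda>_. v)"
  proof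
    fix k
    have "x (e k ^ 4 + i) = v" if "i < e k" for i
      using e[of k] that by (intro assms(2)) (auto simp: block_def)
    then show "window_avg (\<lambda>k. e k ^ 4) e x k = v" using e[of k] by (simp add: window_avg_def)
  qed
  moreover have "filterlim e at_top sequentially"
    unfolding e_def using J by (intro filterlim_subseq strict_mono_enumerate)
  ultimately show ?thesis
    using e by (intro banach_limit_exists_window_avg[where a = "\<lambda>k. e k ^ 4"]) auto
qed

section \<open>Dyadic patterns\<close>

lemma eventually_floor_pow2_mult_neq:
  fixes t t' :: real
  assumes "t \<noteq> t'"
  shows "eventually (\<lambda>m::nat. \<lfloor>2 ^ m * t\<rfloor> \<noteq> \<lfloor>2 ^ m * t'\<rfloor>) sequentially"
proof -
  obtain M :: nat where M: "1 / \<bar>t - t'\<bar> < 2 ^ M"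
    using real_arch_pow[of "2::real" "1 / \<bar>t - t'\<bar>"] by auto
  have "\<lfloor>2 ^ m * t\<rfloor> \<noteq> \<lfloor>2 ^ m * t'\<rfloor>" if "M \<le> m" for m :: nat
  proof
    assume eq: "\<lfloor>2 ^ m * t\<rfloor> = \<lfloor>2 ^ m * t'\<rfloor>"
    have close: "\<bar>2 ^ m * t - 2 ^ m * t'\<bar> < 1"
      using floor_correct[of "2 ^ m * t"] floor_correct[of "2 ^ m * t'"] eq by linarith
    have "1 < 2 ^ M * \<bar>t - t'\<bar>" using M assms by (simp add: divide_less_eq)
    also have "\<dots> \<le> 2 ^ m * \<bar>t - t'\<bar>" using that by (intro mult_right_mono power_increasing) auto
    finally show False using close by (simp add: abs_mult flip: right_diff_distrib)
  qed
  then show ?thesis unfolding eventually_sequentially by blast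
qed

lemma eventually_inj_on_floor_pow2_mult:
  fixes t :: "'a \<Rightarrow> real"
  assumes "finite I" and "inj_on t I"
  shows "eventually (\<lambda>m::nat. inj_on (\<lambda>i. \<lfloor>2 ^ m * t i\<rfloor>) I) sequentially"
proof -
  have "\<forall>i\<in>I. eventually (\<lambda>m::nat. \<forall>i'\<in>I. i \<noteq> i' \<longrightarrow> \<lfloor>2 ^ m * t i\<rfloor> \<noteq> \<lfloor>2 ^ m * t i'\<rfloor>) sequentially"
  proof
    fix i assume "i \<in> I"
    have "eventually (\<lambda>m::nat. i \<noteq> i' \<longrightarrow> \<lfloor>2 ^ m * t i\<rfloor> \<noteq> \<lfloor>2 ^ m * t i'\<rfloor>) sequentially"
      if "i' \<in> I" for i'
    proof (cases "i = i'")
      case False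
      with assms(2) \<open>i \<in> I\<close> \<open>i' \<in> I\<close> have "t i \<noteq> t i'" by (auto dest: inj_onD)
      from eventually_floor_pow2_mult_neq[OF this] show ?thesis by (rule eventually_mono) simp
    qed simp
    then show "eventually (\<lambda>m::nat. \<forall>i'\<in>I. i \<noteq> i' \<longrightarrow> \<lfloor>2 ^ m * t i\<rfloor> \<noteq> \<lfloor>2 ^ m * t i'\<rfloor>) sequentially"
      by (intro eventually_ball_finite[OF assms(1)] ballI)
  qed
  from eventually_ball_finite[OF assms(1) this] show ?thesis
    by (rule eventually_mono) (auto simp: inj_on_def)
qed

type_synonym dyadic_pattern = "nat \<times> (int \<times> nat) list"

text \<open>A pattern \<open>(m, ps)\<close> assigns the value \<open>1 / (s + 1)\<close> to the dyadic interval
  \<open>[q / 2^m, (q + 1) / 2^m)\<close> whenever \<open>(q, s)\<close> is listed in \<open>ps\<close>, and \<open>0\<close> to all other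
  intervals. Patterns form a countable type, so \<open>from_nat\<close> enumerates them.\<close>

definition pattern_value :: "real \<Rightarrow> dyadic_pattern \<Rightarrow> real" where
  "pattern_value t p =
     (case map_of (snd p) \<lfloor>2 ^ fst p * t\<rfloor> of None \<Rightarrow> 0 | Some s \<Rightarrow> 1 / (real s + 1))"

lemma pattern_value_bounds: "0 \<le> pattern_value t p \<and> pattern_value t p \<le> 1"
  unfolding pattern_value_def by (auto split: option.split simp: divide_le_eq)

lemma pattern_value_realises:
  fixes t :: "nat \<Rightarrow> real" and s :: "nat \<Rightarrow> nat"
  assumes "inj_on (\<lambda>i. \<lfloor>2 ^ m * t i\<rfloor>) {..<n}" and "i < n"
  shows "pattern_value (t i) (m, map (\<lambda>i. (\<lfloor>2 ^ m * t i\<rfloor>, s i)) [0..<n]) = 1 / (real (s i) + 1)"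
proof -
  have "distinct (map fst (map (\<lambda>i. (\<lfloor>2 ^ m * t i\<rfloor>, s i)) [0..<n]))"
    using assms(1) by (simp add: distinct_map o_def atLeast0LessThan)
  then have "map_of (map (\<lambda>i. (\<lfloor>2 ^ m * t i\<rfloor>, s i)) [0..<n]) \<lfloor>2 ^ m * t i\<rfloor> = Some (s i)"
    by (rule map_of_is_SomeI) (use assms(2) in auto)
  then show ?thesis by (simp add: pattern_value_def)
qed

lemma infinite_patterns_realising:
  fixes t :: "nat \<Rightarrow> real" and s :: "nat \<Rightarrow> nat"
  assumes "inj_on t {..<n}"
  shows "infinite {j. \<forall>i<n. pattern_value (t i) (from_nat j) = 1 / (real (s i) + 1)}"
proof -
  define pattern :: "nat \<Rightarrow> dyadic_pattern"
    where "pattern m = (m, map (\<lambda>i. (\<lfloor>2 ^ m * t i\<rfloor>, s i)) [0..<n])" for m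
  obtain M where M: "\<And>m. M \<le> m \<Longrightarrow> inj_on (\<lambda>i. \<lfloor>2 ^ m * t i\<rfloor>) {..<n}"
    using eventually_inj_on_floor_pow2_mult[OF _ assms] by (auto simp: eventually_sequentially)
  have "inj (to_nat \<circ> pattern)"
    by (rule inj_compose[OF inj_to_nat]) (simp add: inj_def pattern_def)
  then have "inj_on (to_nat \<circ> pattern) {M..}" by (rule inj_on_subset) simp
  then have "infinite ((to_nat \<circ> pattern) ` {M..})"
    using finite_imageD infinite_Ici by blast
  moreover have "(to_nat \<circ> pattern) ` {M..}
      \<subseteq> {j. \<forall>i<n. pattern_value (t i) (from_nat j) = 1 / (real (s i) + 1)}"
    using pattern_value_realises[OF M] by (auto simp: pattern_def)
  ultimately show ?thesis by (rule infinite_super[rotated])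
qed

section \<open>The free generators\<close>

definition block_seq :: "real \<Rightarrow> nat \<Rightarrow> real" where
  "block_seq t k = (if k \<in> blocks then pattern_value t (from_nat (block_index k)) else 0)"

lemma block_seq_bounds: "0 \<le> block_seq t k \<and> block_seq t k \<le> 1"
  unfolding block_seq_def using pattern_value_bounds by auto

lemma block_seq_on_block: "k \<in> block j \<Longrightarrow> block_seq t k = pattern_value t (from_nat j)"
  by (auto simp: block_seq_def blocks_def block_index_eq)

lemma range_block_seq_linf: "range block_seq \<subseteq> linf"
  using block_seq_bounds by (auto simp: linf_def intro!: BseqI'[of _ 1])

lemma inj_block_seq: "inj block_seq"
proof (rule injI, rule ccontr)
  fix t t' assume eq: "block_seq t = block_seq t'" and "t \<noteq> t'"
  define u where "u i = (if i = 0 then t else t')" for i :: nat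
  have "inj_on u {..<2}" using \<open>t \<noteq> t'\<close> by (auto simp: inj_on_def u_def)
  from infinite_patterns_realising[OF this, of id]
  have "infinite ({j. \<forall>i<2. pattern_value (u i) (from_nat j) = 1 / (real i + 1)} - {0})"
    by simp
  then obtain j where "j \<noteq> 0" and j: "\<forall>i<2. pattern_value (u i) (from_nat j) = 1 / (real i + 1)"
    using infinite_imp_nonempty by blast
  have "block_seq t (j ^ 4) = pattern_value t (from_nat j)"
    and "block_seq t' (j ^ 4) = pattern_value t' (from_nat j)"
    using block_seq_on_block[OF block_start_in_block] \<open>j \<noteq> 0\<close> by auto
  moreover have "pattern_value t (from_nat j) = 1" "pattern_value t' (from_nat j) = 1 / 2"
    using j[rule_format, of 0] j[rule_format, of 1] by (simp_all add: u_def)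
  ultimately show False using eq by simp
qed

lemma Bseq_poly_eval_block_seq: "Bseq (poly_eval n c (\<lambda>i. block_seq (t i)))"
proof (rule BseqI')
  fix k
  have "\<bar>poly_value n c (\<lambda>i. block_seq (t i) k)\<bar> \<le> (\<Sum>\<alpha>\<in>{\<alpha>. c \<alpha> \<noteq> 0}. \<bar>c \<alpha>\<bar>)"
    by (rule poly_value_abs_le) (rule block_seq_bounds)
  then show "norm (poly_eval n c (\<lambda>i. block_seq (t i)) k) \<le> (\<Sum>\<alpha>\<in>{\<alpha>. c \<alpha> \<noteq> 0}. \<bar>c \<alpha>\<bar>)"
    by (simp add: poly_eval_apply)
qed

lemma poly_eval_block_seq_off_blocks:
  assumes "c (\<lambda>_. 0) = 0" and "\<forall>\<alpha>. c \<alpha> \<noteq> 0 \<longrightarrow> (\<forall>i\<ge>n. \<alpha> i = 0)" and "k \<notin> blocks"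
  shows "poly_eval n c (\<lambda>i. block_seq (t i)) k = 0"
  using assms poly_value_zero by (simp add: poly_eval_apply block_seq_def)

lemma poly_eval_block_seq_on_block:
  "k \<in> block j \<Longrightarrow>
     poly_eval n c (\<lambda>i. block_seq (t i)) k = poly_value n c (\<lambda>i. pattern_value (t i) (from_nat j))"
  by (simp add: poly_eval_apply block_seq_on_block)

lemma poly_eval_block_seq_mem:
  assumes "nonconst_poly n c" and "inj_on t {..<n}"
  shows "poly_eval n c (\<lambda>i. block_seq (t i)) \<in> cesaro_S - c_hat - {\<lambda>_. 0}"
proof -
  define y where "y = poly_eval n c (\<lambda>i. block_seq (t i))"
  from assms(1) have fin: "finite {\<alpha>. c \<alpha> \<noteq> 0}"
    and vars: "\<forall>\<alpha>. c \<alpha> \<noteq> 0 \<longrightarrow> (\<forall>i\<ge>n. \<alpha> i = 0)"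
    and const: "c (\<lambda>_. 0) = 0" and "\<exists>\<alpha>. c \<alpha> \<noteq> 0"
    unfolding nonconst_poly_def by auto
  then obtain \<alpha>\<^sub>0 where "c \<alpha>\<^sub>0 \<noteq> 0" by blast
  have "Bseq y" unfolding y_def by (rule Bseq_poly_eval_block_seq)
  have cesaro: "(\<lambda>N. (\<Sum>i<Suc N. y i) / real (Suc N)) \<longlonglongrightarrow> 0"
    by (rule cesaro_mean_tendsto_0_if_density_zero[OF \<open>Bseq y\<close> _ blocks_density_zero])
      (simp add: y_def poly_eval_block_seq_off_blocks[OF const vars])
  then obtain L\<^sub>1 where L\<^sub>1: "banach_limit L\<^sub>1" "L\<^sub>1 y = 0"
    using banach_limit_exists_cesaro by blast
  obtain s where v: "poly_value n c (\<lambda>i. 1 / (real (s i) + 1)) \<noteq> 0"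
    by (rule poly_value_nonzero_at_reciprocals[of c n \<alpha>\<^sub>0, OF fin vars \<open>c \<alpha>\<^sub>0 \<noteq> 0\<close>])
  have on_blocks: "y k = poly_value n c (\<lambda>i. 1 / (real (s i) + 1))"
    if "\<forall>i<n. pattern_value (t i) (from_nat j) = 1 / (real (s i) + 1)" and "k \<in> block j" for j k
    unfolding y_def poly_eval_block_seq_on_block[OF that(2)]
    using that(1) by (intro poly_value_cong) simp
  have "\<exists>L. banach_limit L \<and> L y = poly_value n c (\<lambda>i. 1 / (real (s i) + 1))"
    by (rule banach_limit_exists_constant_on_blocks
        [OF infinite_patterns_realising[OF assms(2), of s]]) (simp add: on_blocks)
  then obtain L\<^sub>2 where L\<^sub>2: "banach_limit L\<^sub>2" "L\<^sub>2 y = poly_value n c (\<lambda>i. 1 / (real (s i) + 1))"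
    by blast
  have "y \<in> cesaro_S"
    using \<open>Bseq y\<close> cesaro by (auto simp: cesaro_S_def linf_def intro: convergentI)
  moreover have "y \<notin> c_hat"
    using not_in_c_hat[OF L\<^sub>1(1) L\<^sub>2(1)] L\<^sub>1(2) L\<^sub>2(2) v by simp
  moreover have "y \<noteq> (\<lambda>_. 0)"
    using banach_limit_zero[OF L\<^sub>2(1)] L\<^sub>2(2) v by auto
  ultimately show ?thesis unfolding y_def by blast
qed

lemma strongly_algebrable_range:
  fixes f :: "'a \<Rightarrow> nat \<Rightarrow> real"
  assumes "inj f" and "range f \<subseteq> linf"
    and "\<And>n c t. nonconst_poly n c \<Longrightarrow> inj_on t {..<n} \<Longrightarrow> poly_eval n c (\<lambda>i. f (t i)) \<in> A - {\<lambda>_. 0}"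
  shows "strongly_algebrable (UNIV :: 'a set) A"
  unfolding strongly_algebrable_def
proof (intro exI conjI allI impI)
  show "range f \<subseteq> linf" by fact
  have "bij_betw f UNIV (range f)" using assms(1) by (rule inj_on_imp_bij_betw)
  then have "(UNIV :: 'a set) \<approx> range f" unfolding eqpoll_def by blast
  then show "range f \<approx> (UNIV :: 'a set)" by (rule eqpoll_sym)
  fix n c z assume z: "nonconst_poly n c \<and> inj_on z {..<n} \<and> z ` {..<n} \<subseteq> range f"
  define t where "t i = inv f (z i)" for i
  have zt: "z i = f (t i)" if "i < n" for i
  proof -
    have "z i \<in> range f" using z that by blast
    then show ?thesis unfolding t_def by (rule f_inv_into_f[symmetric])
  qed
  have "inj_on t {..<n}"
  proof (rule inj_onI)
    fix i i' assume "i \<in> {..<n}" "i' \<in> {..<n}" "t i = t i'"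
    then have "z i = z i'" using zt by simp
    with z \<open>i \<in> {..<n}\<close> \<open>i' \<in> {..<n}\<close> show "i = i'" by (auto dest: inj_onD)
  qed
  with z have "poly_eval n c (\<lambda>i. f (t i)) \<in> A - {\<lambda>_. 0}" by (intro assms(3)) auto
  moreover have "poly_eval n c z = poly_eval n c (\<lambda>i. f (t i))" by (rule poly_eval_cong) (rule zt)
  ultimately show "poly_eval n c z \<in> A - {\<lambda>_. 0}" by simp
qed

theorem theorem3p4:
  shows "strongly_algebrable (UNIV :: real set) (cesaro_S - c_hat)"
  by (rule strongly_algebrable_range[OF inj_block_seq range_block_seq_linf poly_eval_block_seq_mem])

end
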